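(* In the half-line setting, let $\mathcal{S}=\{j\ge0:r_j>0\}=\{j_1<j_2<\cdots\}$. Then: (1) if $\mathcal{S}=\emptyset$, $\mathrm{supp}(\mathcal{H}^{(S)})=\emptyset$; (2) if $1\le|\mathcal{S}|=n<\infty$, then $\mathrm{supp}(\mathcal{H}^{(S)})=\{j\in\mathbb{Z}_+:j\ge j_1\}$ if $C_T<\infty$ (transient walk); $\mathrm{supp}(\mathcal{H}^{(S)})=\emptyset$ if $C_T=\infty$ (recurrent walk) and $n=1$; and $\mathrm{supp}(\mathcal{H}^{(S)})=\{j\in\mathbb{Z}_+:j_1\le j\le j_n\}$ if $C_T=\infty$ and $n>1$; (3) if $|\mathcal{S}|=\infty$, $\mathrm{supp}(\mathcal{H}^{(S)})=\{j\in\mathbb{Z}_+:j\ge j_1\}$.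
   Context: Half-line setting: $V=\mathbb{Z}_+$, parameters $p_j,q_j,r_j\ge0$ with $p_j+q_j+r_j=1$, $q_0=0$, $p_j>0$ ($j\ge0$), $q_j>0$ ($j\ge1$). Arcs: $|j;R\rangle=\delta_{(j+1,j)}$ ($j\ge0$), $|j;L\rangle=\delta_{(j-1,j)}$ ($j\ge1$), $|j;O\rangle=\delta_{(j,j)}$ when $r_j>0$. Shift $S$: $|j;R\rangle\leftrightarrow|j+1;L\rangle$, $|j;O\rangle\mapsto|j;O\rangle$. $a_j=\sqrt{q_j}|j;L\rangle+\sqrt{r_j}|j;O\rangle+\sqrt{p_j}|j;R\rangle$, $b_j=Sa_j$. $\mathcal{H}^{(R)}$ is the closed span of $\{a_j,b_j:j\ge0\}$ in $\ell^2(A)$ and $\mathcal{H}^{(S)}=(\mathcal{H}^{(R)})^\perp$. For a subspace $\mathcal{H}'\subseteq\ell^2(A)$, $\mathrm{supp}(\mathcal{H}')=\{j\in\mathbb{Z}_+:\exists\phi\in\mathcal{H}',\ \exists J\in\{L,O,R\}\text{ with }\langle j;J|\phi\rangle\ne0\}$. $C_T=\sum_{j\ge1}\frac{q_1\cdots q_j}{p_1\cdots p_j}$; the walk is transient iff $C_T<\infty$, recurrent otherwise. *)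

theory Defs
  imports "HOL-Analysis.Analysis"
begin

text \<open>An arc is a pair of naturals; the arc
  (k, j) is attached to vertex j:  |j;R> = delta_(j+1,j),  |j;L> = delta_(j-1,j)
  (j \<ge> 1),  |j;O> = delta_(j,j) (when r j > 0).\<close>

definition arcs :: "(nat \<Rightarrow> real) \<Rightarrow> (nat \<times> nat) set" where
  "arcs r = {(Suc j, j) | j. True} \<union> {(j - 1, j) | j. j \<ge> 1} \<union> {(j, j) | j. r j > 0}"

definition l2A :: "(nat \<Rightarrow> real) \<Rightarrow> (nat \<times> nat \<Rightarrow> complex) set" where
  "l2A r = {f. (\<forall>x. x \<notin> arcs r \<longrightarrow> f x = 0) \<and> (\<lambda>x. (cmod (f x))\<^sup>2) summable_on UNIV}"

definition l2inner :: "(nat \<times> nat \<Rightarrow> complex) \<Rightarrow> (nat \<times> nat \<Rightarrow> complex) \<Rightarrow> complex" where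
  "l2inner f g = infsum (\<lambda>x. cnj (f x) * g x) UNIV"

definition l2norm :: "(nat \<times> nat \<Rightarrow> complex) \<Rightarrow> real" where
  "l2norm f = sqrt (infsum (\<lambda>x. (cmod (f x))\<^sup>2) UNIV)"

definition shiftS :: "(nat \<times> nat \<Rightarrow> complex) \<Rightarrow> (nat \<times> nat \<Rightarrow> complex)" where
  "shiftS f = (\<lambda>(x, y). f (y, x))"

definition avec :: "(nat \<Rightarrow> real) \<Rightarrow> (nat \<Rightarrow> real) \<Rightarrow> (nat \<Rightarrow> real) \<Rightarrow> nat \<Rightarrow> (nat \<times> nat \<Rightarrow> complex)" where
  "avec p q r j = (\<lambda>x.
      (if j \<ge> 1 \<and> x = (j - 1, j) then complex_of_real (sqrt (q j)) else 0)
    + (if r j > 0 \<and> x = (j, j) then complex_of_real (sqrt (r j)) else 0)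
    + (if x = (Suc j, j) then complex_of_real (sqrt (p j)) else 0))"

definition bvec :: "(nat \<Rightarrow> real) \<Rightarrow> (nat \<Rightarrow> real) \<Rightarrow> (nat \<Rightarrow> real) \<Rightarrow> nat \<Rightarrow> (nat \<times> nat \<Rightarrow> complex)" where
  "bvec p q r j = shiftS (avec p q r j)"

definition spanAB :: "(nat \<Rightarrow> real) \<Rightarrow> (nat \<Rightarrow> real) \<Rightarrow> (nat \<Rightarrow> real) \<Rightarrow> (nat \<times> nat \<Rightarrow> complex) set" where
  "spanAB p q r = {(\<lambda>x. \<Sum>i<N. c i * avec p q r i x + d i * bvec p q r i x) | N c d. True}"

definition HR :: "(nat \<Rightarrow> real) \<Rightarrow> (nat \<Rightarrow> real) \<Rightarrow> (nat \<Rightarrow> real) \<Rightarrow> (nat \<times> nat \<Rightarrow> complex) set" where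
  "HR p q r = {\<psi> \<in> l2A r. \<forall>e>0. \<exists>\<phi> \<in> spanAB p q r. l2norm (\<lambda>x. \<psi> x - \<phi> x) < e}"

definition HS :: "(nat \<Rightarrow> real) \<Rightarrow> (nat \<Rightarrow> real) \<Rightarrow> (nat \<Rightarrow> real) \<Rightarrow> (nat \<times> nat \<Rightarrow> complex) set" where
  "HS p q r = {\<phi> \<in> l2A r. \<forall>\<psi> \<in> HR p q r. l2inner \<psi> \<phi> = 0}"

definition supp_sub :: "(nat \<Rightarrow> real) \<Rightarrow> (nat \<times> nat \<Rightarrow> complex) set \<Rightarrow> nat set" where
  "supp_sub r H = {j. \<exists>\<phi> \<in> H.
      \<phi> (Suc j, j) \<noteq> 0 \<or> (j \<ge> 1 \<and> \<phi> (j - 1, j) \<noteq> 0) \<or> (r j > 0 \<and> \<phi> (j, j) \<noteq> 0)}"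

text \<open>C_T < infinity, i.e. sum_{j\<ge>1} (q_1...q_j)/(p_1...p_j) converges (terms are nonnegative).\<close>
definition CT_finite :: "(nat \<Rightarrow> real) \<Rightarrow> (nat \<Rightarrow> real) \<Rightarrow> bool" where
  "CT_finite p q = summable (\<lambda>j. \<Prod>k\<in>{1..Suc j}. q k / p k)"

end

theory Submission
  imports Defs
begin

text \<open>
  H^(S) is the orthogonal complement of the closed span of the generators a_j, b_j, so a vector
  lies in H^(S) iff it is orthogonal to every generator (orthogonality passes to the closure by a
  weighted Cauchy-Schwarz estimate).  These orthogonality relations make such a vector symmetric
  under the shift, with a common value s_j on the two arcs between j and j+1, and force the pair
  (s, w), w_j being the value on the loop at j, to solve the three-term relation
      sqrt q_j s_(j-1) + sqrt r_j w_j + sqrt p_j s_j = 0,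
  square-summably and with w = 0 off the loops; conversely every such solution is a vector of
  H^(S).  The support of the solution space is then computed directly: s vanishes below the first
  loop; beyond the last loop s_j is s_m times a product of factors -sqrt(q_k/p_k), square-summable
  iff s_m = 0 or C_T is finite; and explicit solutions (escaping from a loop when C_T is finite, or
  bridging two loops in any case) show that all vertices of the claimed supports are attained.
\<close>

lemma arcs_diag_iff: "(j, j) \<in> arcs r \<longleftrightarrow> r j > 0"
  by (auto simp: arcs_def)

lemma arcs_right [simp]: "(Suc j, j) \<in> arcs r"
  by (auto simp: arcs_def)

lemma arcs_left [simp]: "(j, Suc j) \<in> arcs r"
proof -
  have "(j, Suc j) \<in> {(j - 1, j) | j. j \<ge> 1}"
    by (rule CollectI, rule exI[of _ "Suc j"]) simp
  then show ?thesis by (auto simp: arcs_def)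
qed

lemma summable_on_finite_support:
  assumes "finite F" "\<And>x. x \<notin> F \<Longrightarrow> f x = 0"
  shows "f summable_on A"
proof -
  have "f summable_on A \<longleftrightarrow> f summable_on (F \<inter> A)"
    by (rule summable_on_cong_neutral) (auto simp: assms(2))
  then show ?thesis using assms(1) by simp
qed

lemma l2inner_finite_support:
  assumes "finite F" "\<And>x. x \<notin> F \<Longrightarrow> f x = 0"
  shows "l2inner f \<phi> = (\<Sum>x\<in>F. cnj (f x) * \<phi> x)"
proof -
  have "l2inner f \<phi> = infsum (\<lambda>x. cnj (f x) * \<phi> x) F"
    unfolding l2inner_def by (rule infsum_cong_neutral) (auto simp: assms(2))
  then show ?thesis using assms(1) by simp
qed

lemma l2A_finite_support:
  assumes "finite F" "\<And>x. x \<notin> F \<Longrightarrow> f x = 0" "\<And>x. x \<notin> arcs r \<Longrightarrow> f x = 0"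
  shows "f \<in> l2A r"
  unfolding l2A_def using assms by (auto intro!: summable_on_finite_support[of F])

lemma avec_support: "x \<notin> {(j - 1, j), (j, j), (Suc j, j)} \<Longrightarrow> avec p q r j x = 0"
  by (auto simp: avec_def)

lemma bvec_support: "x \<notin> {(j, j - 1), (j, j), (j, Suc j)} \<Longrightarrow> bvec p q r j x = 0"
  by (auto simp: bvec_def shiftS_def avec_def split: prod.splits)

text \<open>Inner products with the generators: the two local relations defining H^(S).\<close>

lemma l2inner_avec:
  assumes "q 0 = 0" "r j \<ge> 0"
  shows "l2inner (avec p q r j) \<phi> = of_real (sqrt (q j)) * \<phi> (j - 1, j)
           + of_real (sqrt (r j)) * \<phi> (j, j) + of_real (sqrt (p j)) * \<phi> (Suc j, j)"
proof (cases "j = 0")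
  case True
  have "l2inner (avec p q r j) \<phi> = (\<Sum>x\<in>{(0,0),(1,0)}. cnj (avec p q r j x) * \<phi> x)"
    by (rule l2inner_finite_support) (auto simp: avec_def True)
  also have "\<dots> = of_real (sqrt (r 0)) * \<phi> (0,0) + of_real (sqrt (p 0)) * \<phi> (1,0)"
    using assms by (cases "r 0 > 0") (auto simp: avec_def True)
  finally show ?thesis using assms True by simp
next
  case False
  have "l2inner (avec p q r j) \<phi> = (\<Sum>x\<in>{(j-1,j),(j,j),(Suc j,j)}. cnj (avec p q r j x) * \<phi> x)"
    by (rule l2inner_finite_support) (auto simp: avec_support)
  also have "\<dots> = of_real (sqrt (q j)) * \<phi> (j - 1, j) + of_real (sqrt (r j)) * \<phi> (j, j)
                   + of_real (sqrt (p j)) * \<phi> (Suc j, j)"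
    using False assms by (cases "r j > 0") (auto simp: avec_def gr0_conv_Suc)
  finally show ?thesis .
qed

lemma l2inner_bvec:
  assumes "q 0 = 0" "r j \<ge> 0"
  shows "l2inner (bvec p q r j) \<phi> = of_real (sqrt (q j)) * \<phi> (j, j - 1)
           + of_real (sqrt (r j)) * \<phi> (j, j) + of_real (sqrt (p j)) * \<phi> (j, Suc j)"
proof (cases "j = 0")
  case True
  have "l2inner (bvec p q r j) \<phi> = (\<Sum>x\<in>{(0,0),(0,1)}. cnj (bvec p q r j x) * \<phi> x)"
    by (rule l2inner_finite_support) (auto simp: bvec_def shiftS_def avec_def True split: prod.splits)
  also have "\<dots> = of_real (sqrt (r 0)) * \<phi> (0,0) + of_real (sqrt (p 0)) * \<phi> (0,1)"
    using assms by (cases "r 0 > 0") (auto simp: bvec_def shiftS_def avec_def True)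
  finally show ?thesis using assms True by simp
next
  case False
  have "l2inner (bvec p q r j) \<phi> = (\<Sum>x\<in>{(j,j-1),(j,j),(j,Suc j)}. cnj (bvec p q r j x) * \<phi> x)"
    by (rule l2inner_finite_support) (auto simp: bvec_support)
  also have "\<dots> = of_real (sqrt (q j)) * \<phi> (j, j - 1) + of_real (sqrt (r j)) * \<phi> (j, j)
                   + of_real (sqrt (p j)) * \<phi> (j, Suc j)"
    using False assms by (cases "r j > 0") (auto simp: bvec_def shiftS_def avec_def gr0_conv_Suc)
  finally show ?thesis .
qed

lemma avec_l2A: "avec p q r j \<in> l2A r"
proof (rule l2A_finite_support[of "{(j-1,j),(j,j),(Suc j,j)}"])
  fix x assume x: "x \<notin> arcs r"
  have "x \<noteq> (Suc j, j)" "\<not> (r j > 0 \<and> x = (j,j))" using x arcs_diag_iff by auto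
  moreover have "\<not> (j \<ge> 1 \<and> x = (j-1,j))" using x arcs_left[of "j-1" r] by (cases j) auto
  ultimately show "avec p q r j x = 0" by (auto simp add: avec_def)
qed (auto simp: avec_support)

lemma bvec_l2A: "bvec p q r j \<in> l2A r"
proof (rule l2A_finite_support[of "{(j,j-1),(j,j),(j,Suc j)}"])
  fix x assume x: "x \<notin> arcs r"
  have "x \<noteq> (j, Suc j)" "\<not> (r j > 0 \<and> x = (j,j))" using x arcs_diag_iff by auto
  moreover have "\<not> (j \<ge> 1 \<and> x = (j,j-1))" using x arcs_right[of "j-1" r] by (cases j) auto
  ultimately show "bvec p q r j x = 0"
    by (auto simp add: bvec_def shiftS_def avec_def split: prod.splits)
qed (auto simp: bvec_support)

lemma spanAB_generator: "(\<lambda>x. c * avec p q r j x + d * bvec p q r j x) \<in> spanAB p q r"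
proof -
  define c' d' where "c' i = (if i = j then c else 0)" and "d' i = (if i = j then d else 0)" for i
  have "(\<Sum>i<Suc j. c' i * avec p q r i x + d' i * bvec p q r i x)
          = (\<Sum>i<Suc j. if i = j then c * avec p q r i x + d * bvec p q r i x else 0)" for x
    by (rule sum.cong) (auto simp: c'_def d'_def)
  then have "(\<lambda>x. c * avec p q r j x + d * bvec p q r j x)
               = (\<lambda>x. \<Sum>i<Suc j. c' i * avec p q r i x + d' i * bvec p q r i x)"
    by simp
  then show ?thesis unfolding spanAB_def by blast
qed

lemma spanAB_l2A_HR:
  assumes "f \<in> l2A r" "f \<in> spanAB p q r"
  shows "f \<in> HR p q r"
  unfolding HR_def using assms by (auto simp: l2norm_def intro!: bexI[of _ f])

lemma avec_HR: "avec p q r j \<in> HR p q r"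
  by (rule spanAB_l2A_HR[OF avec_l2A]) (use spanAB_generator[of 1 p q r j 0] in simp)

lemma bvec_HR: "bvec p q r j \<in> HR p q r"
  by (rule spanAB_l2A_HR[OF bvec_l2A]) (use spanAB_generator[of 0 p q r j 1] in simp)

section \<open>Orthogonality to the closed span\<close>

definition generator_arcs :: "nat \<Rightarrow> (nat \<times> nat) set" where
  "generator_arcs N = (\<Union>i<N. {(i - 1, i), (i, i), (Suc i, i), (i, i - 1), (i, Suc i)})"

lemma finite_generator_arcs: "finite (generator_arcs N)"
  by (simp add: generator_arcs_def)

lemma avec_outside_generator_arcs: "i < N \<Longrightarrow> x \<notin> generator_arcs N \<Longrightarrow> avec p q r i x = 0"
  by (rule avec_support) (auto simp: generator_arcs_def)

lemma bvec_outside_generator_arcs: "i < N \<Longrightarrow> x \<notin> generator_arcs N \<Longrightarrow> bvec p q r i x = 0"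
  by (rule bvec_support) (auto simp: generator_arcs_def)

lemma spanAB_finite_support:
  assumes "\<eta> \<in> spanAB p q r"
  obtains F where "finite F" "\<And>x. x \<notin> F \<Longrightarrow> \<eta> x = 0"
proof -
  obtain N c d where \<eta>: "\<eta> = (\<lambda>x. \<Sum>i<N. c i * avec p q r i x + d i * bvec p q r i x)"
    using assms unfolding spanAB_def by blast
  have "\<eta> x = 0" if "x \<notin> generator_arcs N" for x
    unfolding \<eta> using that
    by (auto intro!: sum.neutral simp: avec_outside_generator_arcs bvec_outside_generator_arcs)
  then show ?thesis using that finite_generator_arcs by blast
qed

lemma l2inner_spanAB_zero:
  assumes "\<eta> \<in> spanAB p q r"
    and "\<And>j. l2inner (avec p q r j) \<phi> = 0" "\<And>j. l2inner (bvec p q r j) \<phi> = 0"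
  shows "l2inner \<eta> \<phi> = 0"
proof -
  obtain N c d where \<eta>: "\<eta> = (\<lambda>x. \<Sum>i<N. c i * avec p q r i x + d i * bvec p q r i x)"
    using assms(1) unfolding spanAB_def by blast
  define F where "F = generator_arcs N"
  have fin: "finite F" by (simp add: F_def finite_generator_arcs)
  have ia: "l2inner (avec p q r i) \<phi> = (\<Sum>x\<in>F. cnj (avec p q r i x) * \<phi> x)" if "i < N" for i
    by (rule l2inner_finite_support[OF fin]) (use that in \<open>auto simp: avec_outside_generator_arcs F_def\<close>)
  have ib: "l2inner (bvec p q r i) \<phi> = (\<Sum>x\<in>F. cnj (bvec p q r i x) * \<phi> x)" if "i < N" for i
    by (rule l2inner_finite_support[OF fin]) (use that in \<open>auto simp: bvec_outside_generator_arcs F_def\<close>)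
  have "l2inner \<eta> \<phi> = (\<Sum>x\<in>F. cnj (\<eta> x) * \<phi> x)"
    by (rule l2inner_finite_support[OF fin])
       (auto intro!: sum.neutral simp: \<eta> F_def avec_outside_generator_arcs bvec_outside_generator_arcs)
  also have "\<dots> = (\<Sum>x\<in>F. \<Sum>i<N. cnj (c i) * (cnj (avec p q r i x) * \<phi> x)
                                   + cnj (d i) * (cnj (bvec p q r i x) * \<phi> x))"
    by (simp add: \<eta> cnj_sum sum_distrib_left sum_distrib_right algebra_simps)
  also have "\<dots> = (\<Sum>i<N. cnj (c i) * (\<Sum>x\<in>F. cnj (avec p q r i x) * \<phi> x)
                         + cnj (d i) * (\<Sum>x\<in>F. cnj (bvec p q r i x) * \<phi> x))"
    by (subst sum.swap) (simp add: sum.distrib sum_distrib_left)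
  also have "\<dots> = (\<Sum>i<N. cnj (c i) * l2inner (avec p q r i) \<phi> + cnj (d i) * l2inner (bvec p q r i) \<phi>)"
    by (rule sum.cong) (auto simp: ia ib)
  also have "\<dots> = 0" by (simp add: assms(2,3))
  finally show ?thesis .
qed

lemma sq_norm_diff_le: fixes a b :: complex shows "(cmod (a - b))\<^sup>2 \<le> 2 * (cmod a)\<^sup>2 + 2 * (cmod b)\<^sup>2"
proof -
  have "(cmod (a - b))\<^sup>2 \<le> (cmod a + cmod b)\<^sup>2"
    by (rule power_mono[OF norm_triangle_ineq4]) simp
  moreover have "(cmod a + cmod b)\<^sup>2 + (cmod a - cmod b)\<^sup>2 = 2 * (cmod a)\<^sup>2 + 2 * (cmod b)\<^sup>2"
    by (simp add: power2_eq_square algebra_simps)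
  ultimately show ?thesis by (smt (verit) zero_le_power2)
qed

lemma sq_summable_diff:
  fixes f g :: "'a \<Rightarrow> complex"
  assumes "(\<lambda>x. (cmod (f x))\<^sup>2) summable_on A" "(\<lambda>x. (cmod (g x))\<^sup>2) summable_on A"
  shows "(\<lambda>x. (cmod (f x - g x))\<^sup>2) summable_on A"
proof (rule summable_on_comparison_test)
  show "(\<lambda>x. 2 * (cmod (f x))\<^sup>2 + 2 * (cmod (g x))\<^sup>2) summable_on A"
    using assms by (intro summable_on_add summable_on_cmult_right)
qed (auto simp: sq_norm_diff_le)

lemma amgm_weighted:
  fixes x y t :: real assumes "t > 0"
  shows "x * y \<le> (t * x\<^sup>2 + y\<^sup>2 / t) / 2"
proof -
  have "(t * x\<^sup>2 + y\<^sup>2 / t) / 2 - x * y = (t * x - y)\<^sup>2 / (2 * t)"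
    using assms by (simp add: field_simps power2_eq_square)
  moreover have "(t * x - y)\<^sup>2 / (2 * t) \<ge> 0" using assms by simp
  ultimately show ?thesis by linarith
qed

lemma inner_product_bound:
  fixes g \<phi> :: "'a \<Rightarrow> complex"
  assumes sg: "(\<lambda>x. (cmod (g x))\<^sup>2) summable_on UNIV"
    and s\<phi>: "(\<lambda>x. (cmod (\<phi> x))\<^sup>2) summable_on UNIV" and t: "t > 0"
  shows "(\<lambda>x. cnj (g x) * \<phi> x) summable_on UNIV"
    and "cmod (\<Sum>\<^sub>\<infinity>x. cnj (g x) * \<phi> x)
           \<le> (t * (\<Sum>\<^sub>\<infinity>x. (cmod (g x))\<^sup>2) + (\<Sum>\<^sub>\<infinity>x. (cmod (\<phi> x))\<^sup>2) / t) / 2"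
proof -
  define h where "h x = (t / 2) * (cmod (g x))\<^sup>2 + (1 / (2 * t)) * (cmod (\<phi> x))\<^sup>2" for x
  have hs: "h summable_on UNIV"
    unfolding h_def using sg s\<phi> by (intro summable_on_add summable_on_cmult_right)
  have le: "norm (cnj (g x) * \<phi> x) \<le> h x" for x
    using amgm_weighted[OF t, of "cmod (g x)" "cmod (\<phi> x)"] t
    by (simp add: h_def norm_mult field_simps)
  have abs: "(\<lambda>x. norm (cnj (g x) * \<phi> x)) summable_on UNIV"
    by (rule summable_on_comparison_test[OF hs]) (use le in auto)
  show "(\<lambda>x. cnj (g x) * \<phi> x) summable_on UNIV" by (rule abs_summable_summable[OF abs])
  have "cmod (\<Sum>\<^sub>\<infinity>x. cnj (g x) * \<phi> x) \<le> (\<Sum>\<^sub>\<infinity>x. norm (cnj (g x) * \<phi> x))"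
    by (rule norm_infsum_bound[OF abs])
  also have "\<dots> \<le> infsum h UNIV" by (rule infsum_mono[OF abs hs]) (use le in auto)
  also have "infsum h UNIV = (\<Sum>\<^sub>\<infinity>x. (t / 2) * (cmod (g x))\<^sup>2) + (\<Sum>\<^sub>\<infinity>x. (1 / (2 * t)) * (cmod (\<phi> x))\<^sup>2)"
    unfolding h_def by (rule infsum_add) (intro summable_on_cmult_right sg s\<phi>)+
  also have "\<dots> = (t / 2) * (\<Sum>\<^sub>\<infinity>x. (cmod (g x))\<^sup>2) + (1 / (2 * t)) * (\<Sum>\<^sub>\<infinity>x. (cmod (\<phi> x))\<^sup>2)"
    by (simp only: infsum_cmult_right[OF sg] infsum_cmult_right[OF s\<phi>])
  finally show "cmod (\<Sum>\<^sub>\<infinity>x. cnj (g x) * \<phi> x)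
           \<le> (t * (\<Sum>\<^sub>\<infinity>x. (cmod (g x))\<^sup>2) + (\<Sum>\<^sub>\<infinity>x. (cmod (\<phi> x))\<^sup>2) / t) / 2"
    using t by (simp add: field_simps)
qed

text \<open>If \<psi> is within e of a finitely supported vector orthogonal to \<phi>, then (weight t = 1/e)
  |<\<psi>, \<phi>>| \<le> e (1 + |\<phi>|^2) / 2.\<close>

lemma l2inner_near_orthogonal:
  assumes s\<psi>: "(\<lambda>x. (cmod (\<psi> x))\<^sup>2) summable_on UNIV" and s\<phi>: "(\<lambda>x. (cmod (\<phi> x))\<^sup>2) summable_on UNIV"
    and F: "finite F" "\<And>x. x \<notin> F \<Longrightarrow> \<eta> x = 0" and orth: "l2inner \<eta> \<phi> = 0"
    and close: "l2norm (\<lambda>x. \<psi> x - \<eta> x) < e"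
  shows "cmod (l2inner \<psi> \<phi>) \<le> e * (1 + (\<Sum>\<^sub>\<infinity>x. (cmod (\<phi> x))\<^sup>2)) / 2"
proof -
  define g where "g x = \<psi> x - \<eta> x" for x
  define A B where "A = (\<Sum>\<^sub>\<infinity>x. (cmod (g x))\<^sup>2)" and "B = (\<Sum>\<^sub>\<infinity>x. (cmod (\<phi> x))\<^sup>2)"
  have s\<eta>: "(\<lambda>x. (cmod (\<eta> x))\<^sup>2) summable_on UNIV"
    by (rule summable_on_finite_support[OF F(1)]) (simp add: F(2))
  have s\<eta>\<phi>: "(\<lambda>x. cnj (\<eta> x) * \<phi> x) summable_on UNIV"
    by (rule summable_on_finite_support[OF F(1)]) (simp add: F(2))
  have sg: "(\<lambda>x. (cmod (g x))\<^sup>2) summable_on UNIV"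
    unfolding g_def by (rule sq_summable_diff[OF s\<psi> s\<eta>])
  have "0 \<le> A" unfolding A_def by (rule infsum_nonneg) simp
  moreover have "sqrt A < e" using close by (simp add: l2norm_def A_def g_def)
  ultimately have e: "e > 0" by (meson real_sqrt_ge_zero order_le_less_trans)
  have A: "A < e\<^sup>2"
    using \<open>0 \<le> A\<close> \<open>sqrt A < e\<close> by (metis real_sqrt_pow2 power_strict_mono real_sqrt_ge_zero zero_less_numeral)
  have "l2inner \<psi> \<phi> = (\<Sum>\<^sub>\<infinity>x. cnj (g x) * \<phi> x + cnj (\<eta> x) * \<phi> x)"
    unfolding l2inner_def g_def by (simp add: algebra_simps)
  also have "\<dots> = (\<Sum>\<^sub>\<infinity>x. cnj (g x) * \<phi> x) + l2inner \<eta> \<phi>"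
    unfolding l2inner_def by (rule infsum_add[OF inner_product_bound(1)[OF sg s\<phi>, of 1] s\<eta>\<phi>]) simp
  finally have "cmod (l2inner \<psi> \<phi>) \<le> ((1 / e) * A + B / (1 / e)) / 2"
    using inner_product_bound(2)[OF sg s\<phi>, of "1 / e"] e orth by (simp add: A_def B_def)
  also have "\<dots> \<le> (e + B * e) / 2" using A e by (simp add: field_simps power2_eq_square)
  finally show ?thesis by (simp add: algebra_simps B_def)
qed

text \<open>Orthogonality to the generators passes to the closure H^(R), since the bound above holds
  for every e > 0.\<close>

lemma orthogonal_to_HR:
  assumes \<phi>: "\<phi> \<in> l2A r"
    and orth_a: "\<And>j. l2inner (avec p q r j) \<phi> = 0" and orth_b: "\<And>j. l2inner (bvec p q r j) \<phi> = 0"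
    and \<psi>: "\<psi> \<in> HR p q r"
  shows "l2inner \<psi> \<phi> = 0"
proof -
  define B where "B = (\<Sum>\<^sub>\<infinity>x. (cmod (\<phi> x))\<^sup>2)"
  have B: "B \<ge> 0" unfolding B_def by (rule infsum_nonneg) simp
  have s\<phi>: "(\<lambda>x. (cmod (\<phi> x))\<^sup>2) summable_on UNIV" using \<phi> by (simp add: l2A_def)
  have s\<psi>: "(\<lambda>x. (cmod (\<psi> x))\<^sup>2) summable_on UNIV" using \<psi> by (simp add: HR_def l2A_def)
  have small: "cmod (l2inner \<psi> \<phi>) \<le> e * (1 + B) / 2" if "e > 0" for e
  proof -
    obtain \<eta> where \<eta>: "\<eta> \<in> spanAB p q r" and close: "l2norm (\<lambda>x. \<psi> x - \<eta> x) < e"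
      using \<psi> \<open>e > 0\<close> by (auto simp: HR_def)
    obtain F where "finite F" "\<And>x. x \<notin> F \<Longrightarrow> \<eta> x = 0"
      using spanAB_finite_support[OF \<eta>] by blast
    then show ?thesis
      using l2inner_near_orthogonal[OF s\<psi> s\<phi> _ _ l2inner_spanAB_zero[OF \<eta> orth_a orth_b] close]
      by (simp add: B_def)
  qed
  have "cmod (l2inner \<psi> \<phi>) \<le> 0"
  proof (rule field_le_epsilon)
    fix d :: real assume "d > 0"
    then show "cmod (l2inner \<psi> \<phi>) \<le> 0 + d" using small[of "2 * d / (1 + B)"] B by simp
  qed
  then show ?thesis by simp
qed

lemma HS_iff_orthogonal_generators:
  "\<phi> \<in> HS p q r \<longleftrightarrow> \<phi> \<in> l2A r \<and> (\<forall>j. l2inner (avec p q r j) \<phi> = 0 \<and> l2inner (bvec p q r j) \<phi> = 0)"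
  using avec_HR bvec_HR orthogonal_to_HR unfolding HS_def by blast

section \<open>Reduction to a three-term relation on sequences\<close>

text \<open>A pair (s, w) of sequences describes the vector taking the value s_j on both arcs between j and
  j+1 and the value w_j on the loop at j.  The vector lies in H^(S) exactly when (s, w) is a
  square-summable solution of the relation below, with w vanishing where there is no loop.\<close>

definition kernel_eq :: "(nat \<Rightarrow> real) \<Rightarrow> (nat \<Rightarrow> real) \<Rightarrow> (nat \<Rightarrow> real)
    \<Rightarrow> (nat \<Rightarrow> complex) \<Rightarrow> (nat \<Rightarrow> complex) \<Rightarrow> bool" where
  "kernel_eq p q r s w \<longleftrightarrow>
     (\<forall>j. of_real (sqrt (q j)) * s (j - 1) + of_real (sqrt (r j)) * w j + of_real (sqrt (p j)) * s j = 0)"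

definition kernel_seq :: "(nat \<Rightarrow> real) \<Rightarrow> (nat \<Rightarrow> real) \<Rightarrow> (nat \<Rightarrow> real)
    \<Rightarrow> (nat \<Rightarrow> complex) \<Rightarrow> (nat \<Rightarrow> complex) \<Rightarrow> bool" where
  "kernel_seq p q r s w \<longleftrightarrow> kernel_eq p q r s w \<and> (\<forall>j. \<not> r j > 0 \<longrightarrow> w j = 0)
     \<and> summable (\<lambda>j. (cmod (s j))\<^sup>2) \<and> summable (\<lambda>j. (cmod (w j))\<^sup>2)"

definition arc_vector :: "(nat \<Rightarrow> complex) \<Rightarrow> (nat \<Rightarrow> complex) \<Rightarrow> nat \<times> nat \<Rightarrow> complex" where
  "arc_vector s w x = (if fst x = Suc (snd x) then s (snd x) else if snd x = Suc (fst x) then s (fst x)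
                        else if fst x = snd x then w (fst x) else 0)"

definition kernel_supp :: "(nat \<Rightarrow> real) \<Rightarrow> (nat \<Rightarrow> real) \<Rightarrow> (nat \<Rightarrow> real) \<Rightarrow> nat set" where
  "kernel_supp p q r = {j. \<exists>s w. kernel_seq p q r s w \<and> (s j \<noteq> 0 \<or> (1 \<le> j \<and> s (j - 1) \<noteq> 0) \<or> w j \<noteq> 0)}"

lemma arc_vector_right [simp]: "arc_vector s w (Suc j, j) = s j"
  and arc_vector_left [simp]: "arc_vector s w (j, Suc j) = s j"
  and arc_vector_diag [simp]: "arc_vector s w (j, j) = w j"
  by (simp_all add: arc_vector_def)

lemma summable_along_line:
  assumes "(\<lambda>x. (cmod (\<phi> x))\<^sup>2) summable_on UNIV" "inj h"
  shows "summable (\<lambda>j. (cmod (\<phi> (h j)))\<^sup>2)"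
proof -
  have "(\<lambda>x. (cmod (\<phi> x))\<^sup>2) summable_on range h"
    by (rule summable_on_subset_banach[OF assms(1)]) auto
  then have "((\<lambda>x. (cmod (\<phi> x))\<^sup>2) \<circ> h) summable_on UNIV"
    using summable_on_reindex[of h UNIV "\<lambda>x. (cmod (\<phi> x))\<^sup>2"] assms(2) by simp
  then show ?thesis by (subst summable_on_UNIV_nonneg_real_iff[symmetric]) (auto simp: o_def)
qed

lemma summable_on_from_line:
  assumes "inj h" "summable f" "\<And>j. f j \<ge> (0::real)"
    and "\<And>x. x \<notin> range h \<Longrightarrow> G x = 0" "\<And>j. G (h j) = f j"
  shows "G summable_on UNIV"
proof -
  have "f summable_on UNIV" using assms(2,3) summable_on_UNIV_nonneg_real_iff by blast
  then have "G summable_on range h"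
    using summable_on_reindex[of h UNIV G] assms(1,5) by (simp add: o_def)
  moreover have "G summable_on UNIV \<longleftrightarrow> G summable_on range h"
    by (rule summable_on_cong_neutral) (auto simp: assms(4))
  ultimately show ?thesis by simp
qed

lemma arc_vector_l2A:
  assumes w: "\<And>j. \<not> r j > 0 \<Longrightarrow> w j = 0"
    and ss: "summable (\<lambda>j. (cmod (s j))\<^sup>2)" and sw: "summable (\<lambda>j. (cmod (w j))\<^sup>2)"
  shows "arc_vector s w \<in> l2A r"
proof -
  have vanish: "arc_vector s w x = 0" if "x \<notin> arcs r" for x
  proof -
    obtain a b where x: "x = (a, b)" by fastforce
    have "a \<noteq> Suc b" "b \<noteq> Suc a" using that x by auto
    moreover have "a = b \<Longrightarrow> w a = 0" using that x arcs_diag_iff w by auto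
    ultimately show ?thesis by (auto simp: arc_vector_def x)
  qed
  define R L D where "R x = (if fst x = Suc (snd x) then (cmod (s (snd x)))\<^sup>2 else 0)"
    and "L x = (if snd x = Suc (fst x) then (cmod (s (fst x)))\<^sup>2 else 0)"
    and "D x = (if fst x = snd x then (cmod (w (fst x)))\<^sup>2 else 0)" for x :: "nat \<times> nat"
  have "R summable_on UNIV"
  proof (rule summable_on_from_line[of "\<lambda>j. (Suc j, j)" "\<lambda>j. (cmod (s j))\<^sup>2"])
    show "R x = 0" if "x \<notin> range (\<lambda>j. (Suc j, j))" for x
      using that by (cases x) (auto simp: R_def)
  qed (auto simp: R_def inj_def ss)
  moreover have "L summable_on UNIV"
  proof (rule summable_on_from_line[of "\<lambda>j. (j, Suc j)" "\<lambda>j. (cmod (s j))\<^sup>2"])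
    show "L x = 0" if "x \<notin> range (\<lambda>j. (j, Suc j))" for x
      using that by (cases x) (auto simp: L_def)
  qed (auto simp: L_def inj_def ss)
  moreover have "D summable_on UNIV"
  proof (rule summable_on_from_line[of "\<lambda>j. (j, j)" "\<lambda>j. (cmod (w j))\<^sup>2"])
    show "D x = 0" if "x \<notin> range (\<lambda>j. (j, j))" for x
      using that by (cases x) (auto simp: D_def)
  qed (auto simp: D_def inj_def sw)
  moreover have "(\<lambda>x. (cmod (arc_vector s w x))\<^sup>2) = (\<lambda>x. R x + L x + D x)"
    by (rule ext, case_tac x) (auto simp: arc_vector_def R_def L_def D_def)
  ultimately show ?thesis
    unfolding l2A_def using vanish by (auto intro!: summable_on_add)
qed

lemma eq_by_common_relation:
  fixes a c x y :: "'a :: field"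
  assumes "a + c * x = 0" "a + c * y = 0" "c \<noteq> 0"
  shows "x = y"
proof -
  have "a + c * x = a + c * y" using assms(1,2) by simp
  then show ?thesis using assms(3) by simp
qed

text \<open>The standing hypotheses of the half-line walk.\<close>

locale half_line_walk =
  fixes p q r :: "nat \<Rightarrow> real"
  assumes q_nonneg: "\<And>j. q j \<ge> 0" and r_nonneg: "\<And>j. r j \<ge> 0" and q0: "q 0 = 0"
    and p_pos: "\<And>j. p j > 0" and q_pos: "\<And>j. j \<ge> 1 \<Longrightarrow> q j > 0"
begin

lemma sqrt_p_nonzero [simp]: "complex_of_real (sqrt (p j)) \<noteq> 0"
  using p_pos[of j] by simp

lemma HS_local_relations:
  assumes "\<phi> \<in> HS p q r"
  shows "of_real (sqrt (q j)) * \<phi> (j - 1, j) + of_real (sqrt (r j)) * \<phi> (j, j)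
           + of_real (sqrt (p j)) * \<phi> (Suc j, j) = 0"
    and "of_real (sqrt (q j)) * \<phi> (j, j - 1) + of_real (sqrt (r j)) * \<phi> (j, j)
           + of_real (sqrt (p j)) * \<phi> (j, Suc j) = 0"
  using assms l2inner_avec[of q r j p \<phi>] l2inner_bvec[of q r j p \<phi>] q0 r_nonneg[of j]
  by (simp_all add: HS_iff_orthogonal_generators)

text \<open>Vectors of H^(S) are shift-symmetric: subtracting the two relations at vertex j transports
  the symmetry on the arcs left of j to the arcs right of j, since p_j > 0.\<close>

lemma HS_shift_symmetric:
  assumes "\<phi> \<in> HS p q r"
  shows "\<phi> (j, Suc j) = \<phi> (Suc j, j)"
proof (induction j)
  case 0
  have "of_real (sqrt (r 0)) * \<phi> (0, 0) + of_real (sqrt (p 0)) * \<phi> (Suc 0, 0) = 0"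
    and "of_real (sqrt (r 0)) * \<phi> (0, 0) + of_real (sqrt (p 0)) * \<phi> (0, Suc 0) = 0"
    using HS_local_relations[OF assms, of 0] q0 by simp_all
  then show ?case by (rule eq_by_common_relation[OF _ _ sqrt_p_nonzero, symmetric])
next
  case (Suc j)
  let ?a = "of_real (sqrt (q (Suc j))) * \<phi> (Suc j, j) + of_real (sqrt (r (Suc j))) * \<phi> (Suc j, Suc j)"
  have "?a + of_real (sqrt (p (Suc j))) * \<phi> (Suc (Suc j), Suc j) = 0"
    and "?a + of_real (sqrt (p (Suc j))) * \<phi> (Suc j, Suc (Suc j)) = 0"
    using HS_local_relations[OF assms, of "Suc j"] Suc.IH by simp_all
  then show ?case by (rule eq_by_common_relation[OF _ _ sqrt_p_nonzero, symmetric])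
qed

lemma HS_kernel_seq:
  assumes \<phi>: "\<phi> \<in> HS p q r"
  shows "kernel_seq p q r (\<lambda>j. \<phi> (Suc j, j)) (\<lambda>j. \<phi> (j, j))"
proof -
  have l2: "\<phi> \<in> l2A r" using \<phi> by (simp add: HS_def)
  have "kernel_eq p q r (\<lambda>j. \<phi> (Suc j, j)) (\<lambda>j. \<phi> (j, j))"
    unfolding kernel_eq_def
  proof
    fix j
    show "of_real (sqrt (q j)) * \<phi> (Suc (j - 1), j - 1) + of_real (sqrt (r j)) * \<phi> (j, j)
            + of_real (sqrt (p j)) * \<phi> (Suc j, j) = 0"
      using HS_local_relations(1)[OF \<phi>, of j] HS_shift_symmetric[OF \<phi>, of "j - 1"] q0
      by (cases j) simp_all
  qed
  moreover have "\<forall>j. \<not> r j > 0 \<longrightarrow> \<phi> (j, j) = 0"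
    using l2 arcs_diag_iff by (auto simp: l2A_def)
  moreover have sq: "(\<lambda>x. (cmod (\<phi> x))\<^sup>2) summable_on UNIV" using l2 by (simp add: l2A_def)
  have "summable (\<lambda>j. (cmod (\<phi> (Suc j, j)))\<^sup>2)" "summable (\<lambda>j. (cmod (\<phi> (j, j)))\<^sup>2)"
    by (rule summable_along_line[OF sq, simplified]; auto simp: inj_def)+
  ultimately show ?thesis by (simp add: kernel_seq_def)
qed

lemma kernel_seq_HS:
  assumes "kernel_seq p q r s w"
  shows "arc_vector s w \<in> HS p q r"
proof -
  from assms have rel: "kernel_eq p q r s w" and w: "\<And>j. \<not> r j > 0 \<Longrightarrow> w j = 0"
    and ss: "summable (\<lambda>j. (cmod (s j))\<^sup>2)" and sw: "summable (\<lambda>j. (cmod (w j))\<^sup>2)"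
    by (auto simp: kernel_seq_def)
  have "arc_vector s w \<in> l2A r" by (rule arc_vector_l2A[OF w ss sw])
  moreover have "l2inner (avec p q r j) (arc_vector s w) = 0" "l2inner (bvec p q r j) (arc_vector s w) = 0" for j
  proof -
    have "of_real (sqrt (q j)) * s (j - 1) + of_real (sqrt (r j)) * w j + of_real (sqrt (p j)) * s j = 0"
      using rel by (simp add: kernel_eq_def)
    then show "l2inner (avec p q r j) (arc_vector s w) = 0" "l2inner (bvec p q r j) (arc_vector s w) = 0"
      unfolding l2inner_avec[of q r j p, OF q0 r_nonneg] l2inner_bvec[of q r j p, OF q0 r_nonneg]
      using q0 by (cases j; simp)+
  qed
  ultimately show ?thesis by (simp add: HS_iff_orthogonal_generators)
qed

lemma supp_HS_eq_kernel_supp: "supp_sub r (HS p q r) = kernel_supp p q r"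
proof
  show "supp_sub r (HS p q r) \<subseteq> kernel_supp p q r"
  proof
    fix j assume "j \<in> supp_sub r (HS p q r)"
    then obtain \<phi> where \<phi>: "\<phi> \<in> HS p q r"
      and nz: "\<phi> (Suc j, j) \<noteq> 0 \<or> (j \<ge> 1 \<and> \<phi> (j - 1, j) \<noteq> 0) \<or> (r j > 0 \<and> \<phi> (j, j) \<noteq> 0)"
      by (auto simp: supp_sub_def)
    have "j \<ge> 1 \<Longrightarrow> \<phi> (j - 1, j) = \<phi> (Suc (j - 1), j - 1)"
      using HS_shift_symmetric[OF \<phi>, of "j - 1"] by (cases j) auto
    then show "j \<in> kernel_supp p q r"
      unfolding kernel_supp_def using HS_kernel_seq[OF \<phi>] nz by fastforce
  qed
  show "kernel_supp p q r \<subseteq> supp_sub r (HS p q r)"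
  proof
    fix j assume "j \<in> kernel_supp p q r"
    then obtain s w where sw: "kernel_seq p q r s w"
      and nz: "s j \<noteq> 0 \<or> (1 \<le> j \<and> s (j - 1) \<noteq> 0) \<or> w j \<noteq> 0"
      by (auto simp: kernel_supp_def)
    have "w j \<noteq> 0 \<Longrightarrow> r j > 0" using sw by (auto simp: kernel_seq_def)
    moreover have "j \<ge> 1 \<Longrightarrow> arc_vector s w (j - 1, j) = s (j - 1)" by (cases j) auto
    ultimately show "j \<in> supp_sub r (HS p q r)"
      unfolding supp_sub_def using kernel_seq_HS[OF sw] nz by (intro CollectI bexI[of _ "arc_vector s w"]) auto
  qed
qed

end

section \<open>Solving the three-term relation\<close>

lemma prod_split_at:
  fixes f :: "nat \<Rightarrow> 'a :: comm_monoid_mult"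
  assumes "m \<le> n"
  shows "(\<Prod>k\<in>{1..n}. f k) = (\<Prod>k\<in>{1..m}. f k) * (\<Prod>k\<in>{Suc m..n}. f k)"
  using assms by (induction n rule: dec_induct) (simp_all add: mult.assoc)

context half_line_walk
begin

text \<open>Away from loops the relation reads s_j = g_j s_(j-1) with the step factor g_j below;
  its square is the ratio q_j / p_j whose partial products define C_T.\<close>

definition step_factor :: "nat \<Rightarrow> real" where
  "step_factor k = - (sqrt (q k) / sqrt (p k))"

lemma step_factor_nonzero: "k \<ge> 1 \<Longrightarrow> step_factor k \<noteq> 0"
  using q_pos[of k] p_pos[of k] by (simp add: step_factor_def)

lemma relation_step_iff:
  fixes x y :: complex
  shows "of_real (sqrt (q j)) * x + of_real (sqrt (p j)) * y = 0 \<longleftrightarrow> y = x * of_real (step_factor j)"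
    (is "?c * x + ?d * y = 0 \<longleftrightarrow> y = x * ?g")
proof -
  have "sqrt (p j) * step_factor j = - sqrt (q j)"
    using p_pos[of j] by (simp add: step_factor_def)
  then have "?d * ?g = - ?c" by (metis of_real_minus of_real_mult)
  then have "?c * x + ?d * (x * ?g) = 0" by (simp add: mult.left_commute[of _ x])
  then have "?c * x + ?d * y = 0 \<longleftrightarrow> ?c * x + ?d * y = ?c * x + ?d * (x * ?g)" by simp
  also have "\<dots> \<longleftrightarrow> ?d * y = ?d * (x * ?g)" by (rule add_left_cancel)
  also have "\<dots> \<longleftrightarrow> y = x * ?g" using sqrt_p_nonzero by (rule mult_left_cancel)
  finally show ?thesis .
qed

lemma ratio_product_pos: "(\<Prod>k\<in>{1..m}. q k / p k) > 0"
  using q_pos p_pos by (intro prod_pos) (simp add: divide_pos_pos)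

lemma norm_step_product:
  "(cmod (z * of_real (\<Prod>k\<in>A. step_factor k)))\<^sup>2 = (cmod z)\<^sup>2 * (\<Prod>k\<in>A. q k / p k)"
proof -
  have "(step_factor k)\<^sup>2 = q k / p k" for k
    using q_nonneg[of k] p_pos[of k] by (simp add: step_factor_def power_divide)
  then have "(\<Prod>k\<in>A. step_factor k)\<^sup>2 = (\<Prod>k\<in>A. q k / p k)"
    by (simp add: prod_power_distrib)
  then show ?thesis
    by (simp only: norm_mult power_mult_distrib norm_of_real power2_abs)
qed

text \<open>Below the first loop the relation propagates s = 0 upwards from the boundary (q_0 = 0).\<close>

lemma kernel_eq_zero_before_loops:
  assumes rel: "kernel_eq p q r s w" and no_loop: "\<forall>k\<le>j. r k = 0"
  shows "s j = 0"
  using no_loop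
proof (induction j)
  case 0
  then show ?case using rel[unfolded kernel_eq_def, rule_format, of 0] q0 p_pos[of 0] by simp
next
  case (Suc j)
  then show ?case
    using rel[unfolded kernel_eq_def, rule_format, of "Suc j"] p_pos[of "Suc j"] by simp
qed

lemma kernel_eq_product_form:
  assumes rel: "kernel_eq p q r s w" and no_loop: "\<forall>k>m. w k = 0" and "m \<le> j"
  shows "s j = s m * of_real (\<Prod>k\<in>{Suc m..j}. step_factor k)"
  using \<open>m \<le> j\<close>
proof (induction j rule: dec_induct)
  case base
  then show ?case by simp
next
  case (step n)
  have "of_real (sqrt (q (Suc n))) * s n + of_real (sqrt (p (Suc n))) * s (Suc n) = 0"
    using rel[unfolded kernel_eq_def, rule_format, of "Suc n"] no_loop step.hyps(1) by simp
  then have "s (Suc n) = s n * of_real (step_factor (Suc n))" by (simp only: relation_step_iff)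
  then show ?case using step by (simp add: mult.assoc del: of_real_prod)
qed

text \<open>A sequence of product form from m on is square-summable exactly when it vanishes or the
  walk is transient: its squared moduli are a fixed multiple of the terms of C_T.\<close>

lemma product_form_summable_iff:
  assumes prod_form: "\<And>j. m \<le> j \<Longrightarrow> s j = s m * of_real (\<Prod>k\<in>{Suc m..j}. step_factor k)"
  shows "summable (\<lambda>j. (cmod (s j))\<^sup>2) \<longleftrightarrow> s m = 0 \<or> CT_finite p q"
proof -
  define P where "P = (\<Prod>k\<in>{1..m}. q k / p k)"
  have P: "P > 0" unfolding P_def by (rule ratio_product_pos)
  define c where "c = (cmod (s m))\<^sup>2 / P"
  have "(cmod (s (Suc j)))\<^sup>2 = c * (\<Prod>k\<in>{1..Suc j}. q k / p k)" if "m \<le> j" for j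
  proof -
    have "(cmod (s (Suc j)))\<^sup>2 = (cmod (s m))\<^sup>2 * (\<Prod>k\<in>{Suc m..Suc j}. q k / p k)"
      using prod_form[of "Suc j"] that by (simp add: norm_step_product del: of_real_prod prod.cl_ivl_Suc)
    moreover have "(\<Prod>k\<in>{1..Suc j}. q k / p k) = P * (\<Prod>k\<in>{Suc m..Suc j}. q k / p k)"
      unfolding P_def by (rule prod_split_at) (use that in simp)
    ultimately show ?thesis
      using P by (simp add: c_def field_simps del: prod.cl_ivl_Suc)
  qed
  then have tail: "eventually (\<lambda>j. (cmod (s (Suc j)))\<^sup>2 = c * (\<Prod>k\<in>{1..Suc j}. q k / p k)) sequentially"
    using eventually_ge_at_top[of m] by (rule eventually_mono[rotated])
  have "summable (\<lambda>j. (cmod (s j))\<^sup>2) \<longleftrightarrow> summable (\<lambda>j. (cmod (s (Suc j)))\<^sup>2)"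
    by (rule summable_Suc_iff[symmetric])
  also have "\<dots> \<longleftrightarrow> summable (\<lambda>j. c * (\<Prod>k\<in>{1..Suc j}. q k / p k))"
    by (rule summable_cong[OF tail])
  also have "\<dots> \<longleftrightarrow> s m = 0 \<or> CT_finite p q"
    using P by (simp add: c_def CT_finite_def del: prod.cl_ivl_Suc)
  finally show ?thesis .
qed

lemma kernel_seq_vanishes_after_loops:
  assumes sw: "kernel_seq p q r s w" and no_loop: "\<forall>k>m. w k = 0"
    and recurrent: "\<not> CT_finite p q" and "m \<le> j"
  shows "s j = 0"
proof -
  have rel: "kernel_eq p q r s w" and ss: "summable (\<lambda>j. (cmod (s j))\<^sup>2)"
    using sw by (auto simp: kernel_seq_def)
  have "s m = 0"
    using product_form_summable_iff[OF kernel_eq_product_form[OF rel no_loop]] ss recurrent by blast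
  then show ?thesis using kernel_eq_product_form[OF rel no_loop \<open>m \<le> j\<close>] by simp
qed

text \<open>The escaping solution: a unit weight on the loop at a, with s zero below a and of product
  form above a.  It is square-summable when the walk is transient.\<close>

definition loop_at :: "nat \<Rightarrow> nat \<Rightarrow> complex" where
  "loop_at a j = (if j = a then 1 else 0)"

definition escape_seq :: "nat \<Rightarrow> nat \<Rightarrow> complex" where
  "escape_seq a j = (if j < a then 0
     else of_real (- (sqrt (r a) / sqrt (p a)) * (\<Prod>k\<in>{Suc a..j}. step_factor k)))"

lemma escape_seq_step: "a \<le> i \<Longrightarrow> escape_seq a (Suc i) = escape_seq a i * of_real (step_factor (Suc i))"
  by (simp add: escape_seq_def mult.assoc)

lemma escape_seq_nonzero: "r a > 0 \<Longrightarrow> a \<le> j \<Longrightarrow> escape_seq a j \<noteq> 0"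
  using p_pos[of a] step_factor_nonzero by (auto simp: escape_seq_def prod_zero_iff)

lemma escape_kernel_eq: "kernel_eq p q r (escape_seq a) (loop_at a)"
  unfolding kernel_eq_def
proof
  fix j
  consider "j < a" | "j = a" | "a < j" by linarith
  then show "of_real (sqrt (q j)) * escape_seq a (j - 1) + of_real (sqrt (r j)) * loop_at a j
               + of_real (sqrt (p j)) * escape_seq a j = 0"
  proof cases
    case 1
    then show ?thesis by (simp add: escape_seq_def loop_at_def)
  next
    case 2
    have "of_real (sqrt (q j)) * escape_seq a (j - 1) = 0"
      using 2 q0 by (cases j) (simp_all add: escape_seq_def)
    moreover have "of_real (sqrt (p a)) * escape_seq a a = of_real (sqrt (p a) * - (sqrt (r a) / sqrt (p a)))"
      by (simp add: escape_seq_def)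
    then have "of_real (sqrt (p a)) * escape_seq a a = - of_real (sqrt (r a))"
      using p_pos[of a] by simp
    ultimately show ?thesis using 2 by (simp add: loop_at_def)
  next
    case 3
    then obtain i where "j = Suc i" "a \<le> i" by (cases j) auto
    then have "escape_seq a j = escape_seq a (j - 1) * of_real (step_factor j)"
      using escape_seq_step by simp
    then have "of_real (sqrt (q j)) * escape_seq a (j - 1) + of_real (sqrt (p j)) * escape_seq a j = 0"
      by (rule relation_step_iff[THEN iffD2])
    then show ?thesis using 3 by (simp add: loop_at_def)
  qed
qed

lemma escape_kernel_seq:
  assumes loop: "r a > 0" and transient: "CT_finite p q"
  shows "kernel_seq p q r (escape_seq a) (loop_at a)"
proof -
  have "escape_seq a j = escape_seq a a * of_real (\<Prod>k\<in>{Suc a..j}. step_factor k)" if "a \<le> j" for j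
    using that by (simp add: escape_seq_def)
  then have "summable (\<lambda>j. (cmod (escape_seq a j))\<^sup>2)"
    using product_form_summable_iff transient by blast
  moreover have "summable (\<lambda>j. (cmod (loop_at a j))\<^sup>2)"
    by (rule summable_finite[of "{a}"]) (simp_all add: loop_at_def)
  ultimately show ?thesis
    using escape_kernel_eq loop by (simp add: kernel_seq_def loop_at_def)
qed

text \<open>The bridge between two loops a < b: the escaping solution from a, cut off at b, where the
  loop weight at b absorbs the incoming flow.  It has finite support, hence exists in every case.\<close>

definition bridge_seq :: "nat \<Rightarrow> nat \<Rightarrow> nat \<Rightarrow> complex" where
  "bridge_seq a b j = (if j < b then escape_seq a j else 0)"

definition bridge_loop :: "nat \<Rightarrow> nat \<Rightarrow> nat \<Rightarrow> complex" where
  "bridge_loop a b j = (if j = a then 1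
     else if j = b then - (of_real (sqrt (q b)) * escape_seq a (b - 1)) / of_real (sqrt (r b)) else 0)"

lemma bridge_kernel_seq:
  assumes loop_a: "r a > 0" and loop_b: "r b > 0" and "a < b"
  shows "kernel_seq p q r (bridge_seq a b) (bridge_loop a b)"
proof -
  have "kernel_eq p q r (bridge_seq a b) (bridge_loop a b)"
    unfolding kernel_eq_def
  proof
    fix j
    have escape: "of_real (sqrt (q j)) * escape_seq a (j - 1) + of_real (sqrt (r j)) * loop_at a j
                    + of_real (sqrt (p j)) * escape_seq a j = 0"
      using escape_kernel_eq by (simp add: kernel_eq_def)
    have "complex_of_real (sqrt (r b)) \<noteq> 0" using loop_b by simp
    then show "of_real (sqrt (q j)) * bridge_seq a b (j - 1) + of_real (sqrt (r j)) * bridge_loop a b j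
                 + of_real (sqrt (p j)) * bridge_seq a b j = 0"
      using escape \<open>a < b\<close>
      by (cases "j < b"; cases "j = b") (auto simp: bridge_seq_def bridge_loop_def loop_at_def)
  qed
  moreover have "summable (\<lambda>j. (cmod (bridge_seq a b j))\<^sup>2)" "summable (\<lambda>j. (cmod (bridge_loop a b j))\<^sup>2)"
    using \<open>a < b\<close> by (intro summable_finite[of "{..b}"]; simp add: bridge_seq_def bridge_loop_def)+
  ultimately show ?thesis
    using loop_a loop_b by (simp add: kernel_seq_def bridge_loop_def)
qed

section \<open>The support of the solution space\<close>

definition loops :: "nat set" where
  "loops = {j. r j > 0}"

lemma kernel_suppE:
  assumes "j \<in> kernel_supp p q r"
  obtains s w where "kernel_seq p q r s w" "s j \<noteq> 0 \<or> (1 \<le> j \<and> s (j - 1) \<noteq> 0) \<or> w j \<noteq> 0"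
  using assms by (auto simp: kernel_supp_def)

lemma kernel_supp_has_loop_below:
  assumes "j \<in> kernel_supp p q r"
  shows "\<exists>k\<le>j. r k > 0"
proof (rule ccontr)
  assume "\<not> ?thesis"
  then have no_loop: "\<forall>k\<le>j. r k = 0" using r_nonneg by (meson not_less order_antisym)
  obtain s w where sw: "kernel_seq p q r s w" and nz: "s j \<noteq> 0 \<or> (1 \<le> j \<and> s (j - 1) \<noteq> 0) \<or> w j \<noteq> 0"
    using assms by (rule kernel_suppE)
  have rel: "kernel_eq p q r s w" and "\<forall>k. \<not> r k > 0 \<longrightarrow> w k = 0" using sw by (auto simp: kernel_seq_def)
  then have "s j = 0" "s (j - 1) = 0" "w j = 0"
    using kernel_eq_zero_before_loops[OF rel] no_loop by auto
  then show False using nz by simp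
qed

text \<open>Transient walk: every vertex at or above a loop is supported (escaping solution).\<close>

lemma kernel_supp_above_loop_transient:
  assumes "r a > 0" "CT_finite p q" "a \<le> j"
  shows "j \<in> kernel_supp p q r"
  unfolding kernel_supp_def using escape_kernel_seq[OF assms(1,2)] escape_seq_nonzero[OF assms(1,3)] by blast

text \<open>Every vertex between two loops is supported (bridge solution).\<close>

lemma kernel_supp_between_loops:
  assumes loop_a: "r a > 0" and loop_b: "r b > 0" and "a < b" "a \<le> j" "j \<le> b"
  shows "j \<in> kernel_supp p q r"
proof (cases "j < b")
  case True
  then have "bridge_seq a b j \<noteq> 0"
    using escape_seq_nonzero[OF loop_a \<open>a \<le> j\<close>] by (simp add: bridge_seq_def)
  then show ?thesis unfolding kernel_supp_def using bridge_kernel_seq[OF loop_a loop_b \<open>a < b\<close>] by blast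
next
  case False
  then have "j = b" "1 \<le> j" "bridge_seq a b (j - 1) \<noteq> 0"
    using \<open>a < b\<close> \<open>j \<le> b\<close> escape_seq_nonzero[OF loop_a, of "b - 1"] by (auto simp: bridge_seq_def)
  then show ?thesis unfolding kernel_supp_def using bridge_kernel_seq[OF loop_a loop_b \<open>a < b\<close>] by blast
qed

lemma kernel_supp_below_last_loop_recurrent:
  assumes fin: "finite loops" and recurrent: "\<not> CT_finite p q" and j: "j \<in> kernel_supp p q r"
  shows "j \<le> Max loops"
proof (rule ccontr)
  define M where "M = Max loops"
  assume "\<not> j \<le> Max loops"
  then have "M < j" by (simp add: M_def)
  obtain s w where sw: "kernel_seq p q r s w" and nz: "s j \<noteq> 0 \<or> (1 \<le> j \<and> s (j - 1) \<noteq> 0) \<or> w j \<noteq> 0"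
    using j by (rule kernel_suppE)
  have "\<forall>k>M. w k = 0"
    using sw Max_ge[OF fin] by (fastforce simp: kernel_seq_def M_def loops_def)
  then show False
    using kernel_seq_vanishes_after_loops[OF sw _ recurrent] nz \<open>M < j\<close> by auto
qed

text \<open>A single loop in a recurrent walk supports nothing: the solution vanishes on both sides of
  the loop, and then the relation at the loop forces its weight to vanish too.\<close>

lemma kernel_supp_single_loop_recurrent:
  assumes single: "loops = {a}" and recurrent: "\<not> CT_finite p q"
  shows "kernel_supp p q r = {}"
proof -
  have only_a: "k \<noteq> a \<Longrightarrow> r k = 0" for k
    using single r_nonneg[of k] by (auto simp: loops_def order_le_less)
  have "j \<notin> kernel_supp p q r" for j
  proof
    assume j: "j \<in> kernel_supp p q r"
    obtain s w where sw: "kernel_seq p q r s w" and nz: "s j \<noteq> 0 \<or> (1 \<le> j \<and> s (j - 1) \<noteq> 0) \<or> w j \<noteq> 0"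
      using j by (rule kernel_suppE)
    have rel: "kernel_eq p q r s w" and w: "\<forall>k. k \<noteq> a \<longrightarrow> w k = 0"
      using sw only_a by (auto simp: kernel_seq_def)
    have "j = a"
      using kernel_supp_has_loop_below[OF j] kernel_supp_below_last_loop_recurrent[OF _ recurrent j] single
        only_a by fastforce
    have s_a: "s a = 0" using kernel_seq_vanishes_after_loops[OF sw _ recurrent, of a a] w by simp
    have s_before: "s (a - 1) = 0"
      using kernel_eq_zero_before_loops[OF rel, of "a - 1"] only_a s_a by (cases a) auto
    have "of_real (sqrt (r a)) * w a = 0"
      using rel[unfolded kernel_eq_def, rule_format, of a] s_a s_before by simp
    then have "w a = 0" using single by (auto simp: loops_def)
    then show False using nz \<open>j = a\<close> s_a s_before by auto
  qed
  then show ?thesis by blast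
qed

lemma kernel_supp_no_loops: "loops = {} \<Longrightarrow> kernel_supp p q r = {}"
  using kernel_supp_has_loop_below by (auto simp: loops_def)

lemma first_loop_le:
  assumes "j \<in> kernel_supp p q r"
  shows "(LEAST k. k \<in> loops) \<le> j"
proof -
  obtain k where "k \<le> j" "k \<in> loops"
    using kernel_supp_has_loop_below[OF assms] by (auto simp: loops_def)
  then show ?thesis using Least_le[of "\<lambda>k. k \<in> loops" k] by linarith
qed

lemma first_loop_in: "loops \<noteq> {} \<Longrightarrow> (LEAST k. k \<in> loops) \<in> loops"
  by (rule LeastI_ex) blast

lemma kernel_supp_transient:
  assumes "loops \<noteq> {}" and transient: "CT_finite p q"
  shows "kernel_supp p q r = {j. (LEAST k. k \<in> loops) \<le> j}"
  using first_loop_le kernel_supp_above_loop_transient[OF _ transient] first_loop_in[OF assms(1)]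
  by (auto simp: loops_def)

lemma kernel_supp_recurrent_single:
  assumes "card loops = 1" and "\<not> CT_finite p q"
  shows "kernel_supp p q r = {}"
  using assms(1) kernel_supp_single_loop_recurrent[OF _ assms(2)] by (metis card_1_singletonE)

lemma kernel_supp_recurrent_multiple:
  assumes fin: "finite loops" and several: "card loops > 1" and recurrent: "\<not> CT_finite p q"
  shows "kernel_supp p q r = {j. (LEAST k. k \<in> loops) \<le> j \<and> j \<le> Max loops}"
proof -
  define a b where "a = (LEAST k. k \<in> loops)" and "b = Max loops"
  have "loops \<noteq> {}" using several by auto
  then have a: "a \<in> loops" and b: "b \<in> loops"
    using first_loop_in Max_in[OF fin] by (auto simp: a_def b_def)
  have bounds: "a \<le> k \<and> k \<le> b" if "k \<in> loops" for k
    using that Least_le[of "\<lambda>k. k \<in> loops"] Max_ge[OF fin] by (auto simp: a_def b_def)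
  have "a < b"
  proof (rule ccontr)
    assume "\<not> a < b"
    then have "loops = {a}" using a bounds by fastforce
    then show False using several by simp
  qed
  then have "{j. a \<le> j \<and> j \<le> b} \<subseteq> kernel_supp p q r"
    using kernel_supp_between_loops a b by (auto simp: loops_def)
  moreover have "kernel_supp p q r \<subseteq> {j. a \<le> j \<and> j \<le> b}"
    using first_loop_le kernel_supp_below_last_loop_recurrent[OF fin recurrent]
    by (auto simp: a_def b_def)
  ultimately show ?thesis by (auto simp: a_def b_def)
qed

lemma kernel_supp_infinite:
  assumes inf: "infinite loops"
  shows "kernel_supp p q r = {j. (LEAST k. k \<in> loops) \<le> j}"
proof -
  define a where "a = (LEAST k. k \<in> loops)"
  have "loops \<noteq> {}" using inf by auto
  then have a: "a \<in> loops" unfolding a_def by (rule first_loop_in)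
  have "j \<in> kernel_supp p q r" if "a \<le> j" for j
  proof -
    obtain b where "j < b" "b \<in> loops" using inf by (meson infinite_nat_iff_unbounded)
    then show ?thesis using kernel_supp_between_loops[of a b j] a that by (auto simp: loops_def)
  qed
  then show ?thesis using first_loop_le by (auto simp: a_def)
qed

end

theorem theorem2:
  fixes p q r :: "nat \<Rightarrow> real"
  assumes nonneg: "\<And>j. p j \<ge> 0" "\<And>j. q j \<ge> 0" "\<And>j. r j \<ge> 0"
    and sum1: "\<And>j. p j + q j + r j = 1"
    and q0: "q 0 = 0"
    and ppos: "\<And>j. p j > 0"
    and qpos: "\<And>j. j \<ge> 1 \<Longrightarrow> q j > 0"
  defines "S \<equiv> {j. r j > 0}"
  shows "(S = {} \<longrightarrow> supp_sub r (HS p q r) = {})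
       \<and> (finite S \<and> S \<noteq> {} \<longrightarrow>
            (CT_finite p q \<longrightarrow> supp_sub r (HS p q r) = {j. j \<ge> (LEAST j. j \<in> S)})
          \<and> (\<not> CT_finite p q \<and> card S = 1 \<longrightarrow> supp_sub r (HS p q r) = {})
          \<and> (\<not> CT_finite p q \<and> card S > 1 \<longrightarrow>
               supp_sub r (HS p q r) = {j. (LEAST j. j \<in> S) \<le> j \<and> j \<le> Max S}))
       \<and> (infinite S \<longrightarrow> supp_sub r (HS p q r) = {j. j \<ge> (LEAST j. j \<in> S)})"
proof -
  interpret half_line_walk p q r
    using nonneg q0 ppos qpos by unfold_locales auto
  have "S = loops" by (simp add: S_def loops_def)
  then show ?thesis
    using kernel_supp_no_loops kernel_supp_transient kernel_supp_recurrent_single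
      kernel_supp_recurrent_multiple kernel_supp_infinite
    by (simp add: supp_HS_eq_kernel_supp)
qed

end
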